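(* For every positive integer $R$, $$\frac{1}{\#\{\mathbf{x}\in\mathbb{Z}^2:\|\mathbf{x}\|_E\le R\}}\sum_{\substack{\mathbf{x}\in\mathbb{Z}^2\\ \|\mathbf{x}\|_E\le R}}\operatorname{length}(o(\mathbf{x}))=\frac{8}{3\pi}\big(\sqrt2+2\sqrt5\big)R+O(1).$$ The implied constant is absolute.
   Context: Define $\mathcal K_1,\mathcal K_2:\mathbb{Z}^2\to\mathbb{Z}^2$ by $\mathcal K_1(x_1,x_2)=(-x_1+x_2,x_2)$ and $\mathcal K_2(x_1,x_2)=(x_1,x_1-x_2)$. The orbit $o(\mathbf{x})$ of $\mathbf{x}=(x_1,x_2)$ under repeated application of $\mathcal K_1,\mathcal K_2$ is traversed as the closed path $P_1\to P_2\to\cdots\to P_6\to P_1$, where $P_1=(x_1,x_2)$, $P_2=(-x_1+x_2,x_2)$, $P_3=(-x_1+x_2,-x_1)$, $P_4=(-x_2,-x_1)$, $P_5=(-x_2,x_1-x_2)$, $P_6=(x_1,x_1-x_2)$. Consecutive points differ by an application of $\mathcal K_1$ or $\mathcal K_2$. The length (perimeter) of the orbit is the total Euclidean length of this closed path: $$\operatorname{length}(o(\mathbf{x}))=2\big(|2x_1-x_2|+|x_1+x_2|+|2x_2-x_1|\big).$$ This quantity depends only on the orbit. $\|\cdot\|_E$ is the Euclidean norm. *)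

theory Defs
  imports "HOL-Analysis.Analysis"
begin

definition K1 :: "int \<times> int \<Rightarrow> int \<times> int" where
  "K1 = (\<lambda>(x1, x2). (- x1 + x2, x2))"

definition K2 :: "int \<times> int \<Rightarrow> int \<times> int" where
  "K2 = (\<lambda>(x1, x2). (x1, x1 - x2))"

definition enorm :: "int \<times> int \<Rightarrow> real" where
  "enorm = (\<lambda>(x1, x2). sqrt (real_of_int x1 ^ 2 + real_of_int x2 ^ 2))"

definition edist :: "int \<times> int \<Rightarrow> int \<times> int \<Rightarrow> real" where
  "edist p q = enorm (fst p - fst q, snd p - snd q)"

definition orbit_path :: "int \<times> int \<Rightarrow> (int \<times> int) list" where
  "orbit_path x = [x, K1 x, K2 (K1 x), K1 (K2 (K1 x)), K2 (K1 (K2 (K1 x))),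
                   K1 (K2 (K1 (K2 (K1 x))))]"

definition orbit_length :: "int \<times> int \<Rightarrow> real" where
  "orbit_length x = (let P = orbit_path x in
     (\<Sum>i<6. edist (P ! i) (P ! ((i + 1) mod 6))))"

definition disc_points :: "real \<Rightarrow> (int \<times> int) set" where
  "disc_points R = {x. enorm x \<le> R}"

end

theory Submission
  imports Defs
begin

text \<open>
  The orbit of \<open>(a, b)\<close> has length \<open>2 (\<bar>2a - b\<bar> + \<bar>a + b\<bar> + \<bar>a - 2b\<bar>)\<close>, so everything
  reduces to summing \<open>\<bar>L\<bar>\<close> over the disc for a primitive linear form \<open>L = p a + q b\<close>.
  Completing \<open>(p, q)\<close> to a unimodular basis shows that the lattice points with \<open>L = k\<close> lie on one
  lattice line, on which the disc of radius \<open>R\<close> cuts out \<open>2 \<surd>(m R\<^sup>2 - k\<^sup>2) / m + O(1)\<close> points,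
  \<open>m = p\<^sup>2 + q\<^sup>2\<close>.  The resulting one-dimensional sums \<open>\<Sum>\<bar>k\<bar> \<surd>(b\<^sup>2 - k\<^sup>2)\<close> and
  \<open>\<Sum>\<surd>(b\<^sup>2 - k\<^sup>2)\<close> have unimodal summands and are compared with their integrals
  \<open>2b\<^sup>3/3\<close> and \<open>\<pi> b\<^sup>2/2\<close> up to \<open>O(b\<^sup>2)\<close> resp. \<open>O(b)\<close>.  Thus the total length is
  \<open>(8/3)(\<surd>2 + 2\<surd>5) R\<^sup>3 + O(R\<^sup>2)\<close> (the forms have \<open>m = 5, 2, 5\<close>), the number of points is
  \<open>\<pi> R\<^sup>2 + O(R)\<close>, and since it is also at least \<open>R\<^sup>2\<close> the quotient is
  \<open>(8 / 3\<pi>)(\<surd>2 + 2\<surd>5) R + O(1)\<close>.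
\<close>

section \<open>Sums compared with antiderivatives\<close>

lemma has_real_derivative_mvt:
  fixes f F :: "real \<Rightarrow> real"
  assumes "a < c" and "continuous_on {a..c} F"
    and "\<And>t. a < t \<Longrightarrow> t < c \<Longrightarrow> (F has_real_derivative f t) (at t)"
  obtains \<xi> where "a < \<xi>" "\<xi> < c" "F c - F a = f \<xi> * (c - a)"
  using mvt[of a c F "\<lambda>t. (*) (f t)"] assms by (auto simp: has_field_derivative_def)

lemma sum_antiderivative_error_mono:
  fixes f F :: "real \<Rightarrow> real" and m n :: nat
  assumes "m \<le> n" and cont: "continuous_on {real m..real n} F"
    and der: "\<And>t. real m < t \<Longrightarrow> t < real n \<Longrightarrow> (F has_real_derivative f t) (at t)"
    and mono: "mono_on {real m..real n} f"
  shows "\<bar>(\<Sum>k=m..<n. f k) - (F n - F m)\<bar> \<le> f n - f m"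
proof -
  have step: "f k \<le> F (Suc k) - F k \<and> F (Suc k) - F k \<le> f (Suc k)" if k: "k \<in> {m..<n}" for k
  proof -
    have sub: "{real k..real k + 1} \<subseteq> {real m..real n}"
      using k by auto
    have der_k: "(F has_real_derivative f t) (at t)" if "real k < t" "t < real k + 1" for t
      using that k by (intro der) auto
    obtain \<xi> where \<xi>: "real k < \<xi>" "\<xi> < real k + 1" "F (real k + 1) - F k = f \<xi> * (real k + 1 - real k)"
      by (rule has_real_derivative_mvt[OF _ continuous_on_subset[OF cont sub] der_k]) simp
    have "f k \<le> f \<xi>" "f \<xi> \<le> f (real k + 1)"
      using \<xi> sub by (auto intro!: mono_onD[OF mono])
    then show ?thesis
      using \<xi> by (simp add: add.commute)
  qed
  have "(\<Sum>k=m..<n. F (Suc k) - F k) = F n - F m"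
    using sum_Suc_diff'[OF \<open>m \<le> n\<close>, of "\<lambda>k. F (real k)"] by simp
  then have error_eq: "F n - F m - (\<Sum>k=m..<n. f k) = (\<Sum>k=m..<n. F (Suc k) - F k - f k)"
    by (simp add: sum_subtractf)
  have "0 \<le> (\<Sum>k=m..<n. F (Suc k) - F k - f k)"
    using step by (auto intro!: sum_nonneg)
  moreover have "(\<Sum>k=m..<n. F (Suc k) - F k - f k) \<le> (\<Sum>k=m..<n. f (Suc k) - f k)"
    using step by (intro sum_mono) auto
  moreover have "(\<Sum>k=m..<n. f (Suc k) - f k) = f n - f m"
    using sum_Suc_diff'[OF \<open>m \<le> n\<close>, of "\<lambda>k. f (real k)"] by simp
  ultimately show ?thesis
    unfolding abs_le_iff error_eq[symmetric] by linarith
qed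

lemma sum_antiderivative_error_antimono:
  fixes f F :: "real \<Rightarrow> real" and m n :: nat
  assumes "m \<le> n" and cont: "continuous_on {real m..real n} F"
    and der: "\<And>t. real m < t \<Longrightarrow> t < real n \<Longrightarrow> (F has_real_derivative f t) (at t)"
    and antimono: "antimono_on {real m..real n} f"
  shows "\<bar>(\<Sum>k=m..<n. f k) - (F n - F m)\<bar> \<le> f m - f n"
proof -
  have "continuous_on {real m..real n} (\<lambda>t. - F t)"
    using cont by (rule continuous_on_minus)
  moreover have "((\<lambda>t. - F t) has_real_derivative - f t) (at t)" if "real m < t" "t < real n" for t
    using der[OF that] by (rule DERIV_minus)
  moreover have "mono_on {real m..real n} (\<lambda>t. - f t)"
    using antimono by (auto simp: monotone_on_def)
  ultimately show ?thesis
    using sum_antiderivative_error_mono[OF \<open>m \<le> n\<close>, of "\<lambda>t. - F t" "\<lambda>t. - f t"]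
    by (simp add: sum_negf abs_minus_commute)
qed

lemma sum_antiderivative_error_unimodal:
  fixes f F :: "real \<Rightarrow> real" and n :: nat and p H :: real
  assumes cont: "continuous_on {0..real n} F"
    and der: "\<And>t. 0 < t \<Longrightarrow> t < real n \<Longrightarrow> (F has_real_derivative f t) (at t)"
    and "0 \<le> p" and mono: "mono_on {0..p} f" and antimono: "antimono_on {p..real n} f"
    and bound: "\<And>t. 0 \<le> t \<Longrightarrow> t \<le> real n \<Longrightarrow> 0 \<le> f t \<and> f t \<le> H"
  shows "\<bar>(\<Sum>k<n. f k) - (F n - F 0)\<bar> \<le> 3 * H"
proof -
  define q where "q = nat \<lfloor>p\<rfloor>"
  have q: "real q \<le> p" "p < real q + 1"
    using \<open>0 \<le> p\<close> by (simp_all add: q_def)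
  have cont_sub: "continuous_on {real i..real j} F" if "j \<le> n" for i j
    using that by (intro continuous_on_subset[OF cont]) auto
  have der_sub: "(F has_real_derivative f t) (at t)" if "j \<le> n" "real i < t" "t < real j" for i j :: nat and t
    using that by (intro der) auto
  have bound_sub: "0 \<le> f i \<and> f i \<le> H" if "i \<le> n" for i :: nat
    using that bound by simp
  have mono_error: "\<bar>(\<Sum>k=i..<j. f k) - (F j - F i)\<bar> \<le> H"
    if "i \<le> j" "j \<le> n" "mono_on {real i..real j} f" for i j :: nat
    using sum_antiderivative_error_mono[OF that(1) cont_sub[OF that(2)] der_sub[OF that(2), of i] that(3)]
      bound_sub[of i] bound_sub[of j] that by linarith
  have antimono_error: "\<bar>(\<Sum>k=i..<j. f k) - (F j - F i)\<bar> \<le> H"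
    if "i \<le> j" "j \<le> n" "antimono_on {real i..real j} f" for i j :: nat
    using sum_antiderivative_error_antimono[OF that(1) cont_sub[OF that(2)] der_sub[OF that(2), of i] that(3)]
      bound_sub[of i] bound_sub[of j] that by linarith
  consider "n \<le> q" | "q < n" by linarith
  then show ?thesis
  proof cases
    case 1
    have "mono_on {real 0..real n} f"
      using 1 q by (intro mono_on_subset[OF mono]) auto
    with mono_error[of 0 n] show ?thesis
      by (simp add: atLeast0LessThan)
  next
    case 2
    have "mono_on {real 0..real q} f"
      using q by (intro mono_on_subset[OF mono]) auto
    with mono_error[of 0 q] 2 have left: "\<bar>(\<Sum>k=0..<q. f k) - (F q - F 0)\<bar> \<le> H"
      by simp
    have Suc_q: "Suc q \<le> n" "real q < real (Suc q)"
      using 2 by simp_all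
    obtain \<xi> where \<xi>: "real q < \<xi>" "\<xi> < real (Suc q)"
        "F (Suc q) - F q = f \<xi> * (real (Suc q) - real q)"
      by (rule has_real_derivative_mvt[OF Suc_q(2) cont_sub[OF Suc_q(1)] der_sub[OF Suc_q(1), of q]])
    then have middle: "\<bar>f q - (F (Suc q) - F q)\<bar> \<le> H"
      using 2 bound[of \<xi>] bound_sub[of q] by (simp add: abs_le_iff)
    have right: "\<bar>(\<Sum>k=Suc q..<n. f k) - (F n - F (Suc q))\<bar> \<le> H"
      using 2 q by (intro antimono_error monotone_on_subset[OF antimono]) auto
    have "(\<Sum>k<n. f k) = (\<Sum>k=0..<q. f k) + (\<Sum>k=q..<n. f k)"
      using 2 sum.atLeastLessThan_concat[of 0 q n "\<lambda>k. f (real k)"] by (simp add: atLeast0LessThan)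
    also have "(\<Sum>k=q..<n. f k) = f q + (\<Sum>k=Suc q..<n. f k)"
      using 2 by (rule sum.atLeast_Suc_lessThan)
    finally show ?thesis
      using left middle right by (simp add: abs_le_iff)
  qed
qed

lemma sum_symmetric_int_interval:
  fixes h :: "int \<Rightarrow> real"
  assumes "\<And>k. h (- k) = h k"
  shows "(\<Sum>k=- int n..int n. h k) = 2 * (\<Sum>i\<le>n. h (int i)) - h 0"
proof (induction n)
  case (Suc n)
  have "{- int (Suc n)..int (Suc n)} = insert (- int (Suc n)) (insert (int (Suc n)) {- int n..int n})"
    by auto
  then have "(\<Sum>k=- int (Suc n)..int (Suc n). h k)
      = h (- int (Suc n)) + h (int (Suc n)) + (\<Sum>k=- int n..int n. h k)"
    by simp
  then show ?case
    using Suc.IH assms[of "int (Suc n)"] by simp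
qed simp

section \<open>The sums of \<open>\<surd>(b\<^sup>2 - k\<^sup>2)\<close> and \<open>\<bar>k\<bar> \<surd>(b\<^sup>2 - k\<^sup>2)\<close>\<close>

lemma has_real_derivative_sqrt_diff_square:
  fixes r t :: real
  assumes "\<bar>t\<bar> < r"
  shows "((\<lambda>t. sqrt (r\<^sup>2 - t\<^sup>2)) has_real_derivative - t / sqrt (r\<^sup>2 - t\<^sup>2)) (at t)"
proof -
  have "\<bar>t\<bar>\<^sup>2 < r\<^sup>2"
    using assms by (intro power_strict_mono) auto
  then have pos: "0 < r\<^sup>2 - t\<^sup>2"
    by simp
  have "((\<lambda>t. sqrt (r\<^sup>2 - t\<^sup>2)) has_real_derivative inverse (sqrt (r\<^sup>2 - t\<^sup>2)) / 2 * (0 - 2 * t)) (at t)"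
    by (rule DERIV_chain2[where g = "\<lambda>t. r\<^sup>2 - t\<^sup>2", OF DERIV_real_sqrt[OF pos]])
       (auto intro!: derivative_eq_intros)
  then show ?thesis
    by (simp add: field_simps)
qed

lemma has_real_derivative_circle_area:
  fixes r t :: real
  assumes "0 < t" "t < r"
  shows "((\<lambda>t. (t * sqrt (r\<^sup>2 - t\<^sup>2) + r\<^sup>2 * arcsin (t / r)) / 2) has_real_derivative sqrt (r\<^sup>2 - t\<^sup>2)) (at t)"
proof -
  have pos: "0 < r\<^sup>2 - t\<^sup>2"
    using assms by (simp add: power_strict_mono)
  have "-1 < t / r" "t / r < 1"
    using assms by (auto simp: field_simps)
  then have deriv: "((\<lambda>t. (t * sqrt (r\<^sup>2 - t\<^sup>2) + r\<^sup>2 * arcsin (t / r)) / 2) has_real_derivative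
      (1 * sqrt (r\<^sup>2 - t\<^sup>2) + (- t / sqrt (r\<^sup>2 - t\<^sup>2)) * t
        + r\<^sup>2 * (inverse (sqrt (1 - (t / r)\<^sup>2)) * (1 / r))) / 2) (at t)"
    using assms
    by (intro DERIV_cdivide DERIV_add DERIV_mult DERIV_cmult DERIV_ident
        has_real_derivative_sqrt_diff_square DERIV_chain2[OF DERIV_arcsin] DERIV_cdivide) auto
  have "sqrt (1 - (t / r)\<^sup>2) = sqrt (r\<^sup>2 - t\<^sup>2) / r"
    using assms by (simp add: field_simps real_sqrt_divide)
  moreover have "sqrt (r\<^sup>2 - t\<^sup>2) * sqrt (r\<^sup>2 - t\<^sup>2) = r\<^sup>2 - t\<^sup>2"
    using pos by simp
  ultimately have "(1 * sqrt (r\<^sup>2 - t\<^sup>2) + (- t / sqrt (r\<^sup>2 - t\<^sup>2)) * t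
        + r\<^sup>2 * (inverse (sqrt (1 - (t / r)\<^sup>2)) * (1 / r))) / 2 = sqrt (r\<^sup>2 - t\<^sup>2)"
    using pos assms by (simp add: field_simps power2_eq_square)
  with deriv show ?thesis
    by (simp only:)
qed

lemma has_real_derivative_circle_moment:
  fixes b t :: real
  assumes "0 < t" "t < b"
  shows "((\<lambda>t. - ((b\<^sup>2 - t\<^sup>2) * sqrt (b\<^sup>2 - t\<^sup>2)) / 3) has_real_derivative t * sqrt (b\<^sup>2 - t\<^sup>2)) (at t)"
proof -
  have pos: "0 < b\<^sup>2 - t\<^sup>2"
    using assms by (simp add: power_strict_mono)
  have deriv: "((\<lambda>t. - ((b\<^sup>2 - t\<^sup>2) * sqrt (b\<^sup>2 - t\<^sup>2)) / 3) has_real_derivative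
     - ((0 - 2 * t) * sqrt (b\<^sup>2 - t\<^sup>2) + (- t / sqrt (b\<^sup>2 - t\<^sup>2)) * (b\<^sup>2 - t\<^sup>2)) / 3) (at t)"
    using assms
    by (intro DERIV_cdivide DERIV_minus DERIV_mult has_real_derivative_sqrt_diff_square)
       (auto intro!: derivative_eq_intros)
  have "sqrt (b\<^sup>2 - t\<^sup>2) * sqrt (b\<^sup>2 - t\<^sup>2) = b\<^sup>2 - t\<^sup>2"
    using pos by simp
  then have "- ((0 - 2 * t) * sqrt (b\<^sup>2 - t\<^sup>2) + (- t / sqrt (b\<^sup>2 - t\<^sup>2)) * (b\<^sup>2 - t\<^sup>2)) / 3
      = t * sqrt (b\<^sup>2 - t\<^sup>2)"
    using pos by (simp add: field_simps power2_eq_square)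
  with deriv show ?thesis
    by (simp only:)
qed

lemma sum_sqrt_diff_square_approx:
  "\<bar>(\<Sum>k<n. sqrt ((real n)\<^sup>2 - (real k)\<^sup>2)) - pi / 4 * (real n)\<^sup>2\<bar> \<le> real n"
proof (cases "n = 0")
  case False
  define r where "r = real n"
  have "0 < r"
    using False by (simp add: r_def)
  define F where "F t = (t * sqrt (r\<^sup>2 - t\<^sup>2) + r\<^sup>2 * arcsin (t / r)) / 2" for t
  have cont: "continuous_on {real 0..real n} F"
    unfolding F_def r_def[symmetric] using \<open>0 < r\<close>
    by (auto intro!: continuous_intros simp: field_simps)
  have der: "(F has_real_derivative sqrt (r\<^sup>2 - t\<^sup>2)) (at t)" if "real 0 < t" "t < real n" for t
    unfolding F_def using that by (intro has_real_derivative_circle_area) (auto simp: r_def)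
  have antimono: "antimono_on {real 0..real n} (\<lambda>t. sqrt (r\<^sup>2 - t\<^sup>2))"
    by (intro monotone_onI) (auto intro: power_mono)
  have "F n - F 0 = pi / 4 * r\<^sup>2"
    using \<open>0 < r\<close> by (simp add: F_def r_def[symmetric])
  with sum_antiderivative_error_antimono[OF _ cont der antimono] show ?thesis
    by (simp add: r_def atLeast0LessThan)
qed simp

lemma sum_sqrt_diff_square_symmetric_approx:
  "\<bar>(\<Sum>k=- int n..int n. sqrt ((real n)\<^sup>2 - (real_of_int k)\<^sup>2)) - pi / 2 * (real n)\<^sup>2\<bar> \<le> 3 * real n"
proof -
  have "(\<Sum>k=- int n..int n. sqrt ((real n)\<^sup>2 - (real_of_int k)\<^sup>2))
      = 2 * (\<Sum>k\<le>n. sqrt ((real n)\<^sup>2 - (real k)\<^sup>2)) - real n"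
    by (subst sum_symmetric_int_interval) simp_all
  also have "\<dots> = 2 * (\<Sum>k<n. sqrt ((real n)\<^sup>2 - (real k)\<^sup>2)) - real n"
    by (simp add: lessThan_Suc_atMost[symmetric])
  finally show ?thesis
    using sum_sqrt_diff_square_approx[of n] by (simp add: abs_le_iff)
qed

lemma mult_sqrt_diff_square_eq:
  fixes b t :: real
  assumes "0 \<le> t"
  shows "t * sqrt (b\<^sup>2 - t\<^sup>2) = sqrt ((b\<^sup>2 / 2)\<^sup>2 - (t\<^sup>2 - b\<^sup>2 / 2)\<^sup>2)"
proof -
  have "t * sqrt (b\<^sup>2 - t\<^sup>2) = sqrt (t\<^sup>2 * (b\<^sup>2 - t\<^sup>2))"
    using assms by (simp add: real_sqrt_mult)
  also have "t\<^sup>2 * (b\<^sup>2 - t\<^sup>2) = (b\<^sup>2 / 2)\<^sup>2 - (t\<^sup>2 - b\<^sup>2 / 2)\<^sup>2"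
    by (simp add: power2_eq_square field_simps)
  finally show ?thesis .
qed

lemma mult_sqrt_diff_square_bounds:
  fixes b t :: real
  assumes "0 \<le> t" "t \<le> b"
  shows "0 \<le> t * sqrt (b\<^sup>2 - t\<^sup>2) \<and> t * sqrt (b\<^sup>2 - t\<^sup>2) \<le> b\<^sup>2 / 2"
proof -
  have "t * sqrt (b\<^sup>2 - t\<^sup>2) \<le> sqrt ((b\<^sup>2 / 2)\<^sup>2)"
    unfolding mult_sqrt_diff_square_eq[OF assms(1)] by (rule real_sqrt_le_mono) simp
  moreover have "t\<^sup>2 \<le> b\<^sup>2"
    using assms by (intro power_mono)
  ultimately show ?thesis
    using assms by simp
qed

lemma mono_on_mult_sqrt_diff_square:
  fixes b :: real
  shows "mono_on {0..b / sqrt 2} (\<lambda>t. t * sqrt (b\<^sup>2 - t\<^sup>2))"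
proof (intro monotone_onI)
  fix s t assume st: "s \<in> {0..b / sqrt 2}" "t \<in> {0..b / sqrt 2}" "s \<le> t"
  then have "s\<^sup>2 \<le> t\<^sup>2" "t\<^sup>2 \<le> (b / sqrt 2)\<^sup>2"
    by (auto intro: power_mono)
  then have "(b\<^sup>2 / 2 - t\<^sup>2)\<^sup>2 \<le> (b\<^sup>2 / 2 - s\<^sup>2)\<^sup>2"
    by (intro power_mono) (auto simp: power_divide)
  then show "s * sqrt (b\<^sup>2 - s\<^sup>2) \<le> t * sqrt (b\<^sup>2 - t\<^sup>2)"
    using st by (simp add: mult_sqrt_diff_square_eq power2_commute)
qed

lemma antimono_on_mult_sqrt_diff_square:
  fixes b :: real
  assumes "0 \<le> b"
  shows "antimono_on {b / sqrt 2..} (\<lambda>t. t * sqrt (b\<^sup>2 - t\<^sup>2))"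
proof (intro monotone_onI)
  fix s t assume st: "s \<in> {b / sqrt 2..}" "t \<in> {b / sqrt 2..}" "s \<le> t"
  moreover have "0 \<le> b / sqrt 2"
    using assms by simp
  ultimately have "s\<^sup>2 \<le> t\<^sup>2" "(b / sqrt 2)\<^sup>2 \<le> s\<^sup>2"
    by (auto intro: power_mono)
  then have "(s\<^sup>2 - b\<^sup>2 / 2)\<^sup>2 \<le> (t\<^sup>2 - b\<^sup>2 / 2)\<^sup>2"
    by (intro power_mono) (auto simp: power_divide)
  then show "t * sqrt (b\<^sup>2 - t\<^sup>2) \<le> s * sqrt (b\<^sup>2 - s\<^sup>2)"
    using st \<open>0 \<le> b / sqrt 2\<close> by (simp add: mult_sqrt_diff_square_eq)
qed

lemma sum_mult_sqrt_diff_square_approx: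
  fixes b :: real
  assumes "0 \<le> b"
  shows "\<bar>(\<Sum>k\<le>nat \<lfloor>b\<rfloor>. real k * sqrt (b\<^sup>2 - (real k)\<^sup>2)) - b ^ 3 / 3\<bar> \<le> 2 * b\<^sup>2"
proof -
  define n where "n = nat \<lfloor>b\<rfloor>"
  have "real n = of_int \<lfloor>b\<rfloor>"
    using assms by (simp add: n_def)
  then have n: "real n \<le> b" "b < real n + 1"
    by linarith+
  define f where "f t = t * sqrt (b\<^sup>2 - t\<^sup>2)" for t
  define F where "F t = - ((b\<^sup>2 - t\<^sup>2) * sqrt (b\<^sup>2 - t\<^sup>2)) / 3" for t
  have f_bounds: "0 \<le> f t \<and> f t \<le> b\<^sup>2 / 2" if "0 \<le> t" "t \<le> b" for t
    unfolding f_def using that by (rule mult_sqrt_diff_square_bounds)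
  have cont: "continuous_on {s..t} F" for s t
    unfolding F_def by (intro continuous_intros) auto
  have der: "(F has_real_derivative f t) (at t)" if "0 < t" "t < b" for t
    unfolding F_def f_def using that by (rule has_real_derivative_circle_moment)
  have "\<bar>(\<Sum>k<n. f k) - (F n - F 0)\<bar> \<le> 3 * (b\<^sup>2 / 2)"
  proof (rule sum_antiderivative_error_unimodal)
    show "mono_on {0..b / sqrt 2} f"
      unfolding f_def by (rule mono_on_mult_sqrt_diff_square)
    show "antimono_on {b / sqrt 2..real n} f"
      unfolding f_def by (rule monotone_on_subset[OF antimono_on_mult_sqrt_diff_square[OF assms]]) auto
  qed (use assms n f_bounds cont der in auto)
  moreover have "0 \<le> - F n \<and> - F n \<le> b\<^sup>2 / 2"
  proof (cases "real n < b")
    case True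
    obtain \<xi> where \<xi>: "real n < \<xi>" "\<xi> < b" "F b - F n = f \<xi> * (b - real n)"
      by (rule has_real_derivative_mvt[OF True cont der]) auto
    have "0 \<le> f \<xi>" "f \<xi> \<le> b\<^sup>2 / 2"
      using f_bounds[of \<xi>] \<xi> n by auto
    moreover have "0 \<le> b - real n" "b - real n \<le> 1"
      using n by linarith+
    ultimately have "0 \<le> f \<xi> * (b - real n)" "f \<xi> * (b - real n) \<le> b\<^sup>2 / 2 * 1"
      by (simp, intro mult_mono) simp_all
    then show ?thesis
      using \<xi>(3) by (simp add: F_def)
  next
    case False
    then show ?thesis
      using n by (simp add: F_def)
  qed
  moreover have "F 0 = - (b ^ 3 / 3)"
    using assms by (simp add: F_def power2_eq_square power3_eq_cube)
  moreover have "(\<Sum>k\<le>n. f k) = (\<Sum>k<n. f k) + f n"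
    by (simp add: lessThan_Suc_atMost[symmetric])
  ultimately show ?thesis
    using f_bounds[of "real n"] n unfolding n_def[symmetric] f_def[symmetric] abs_le_iff
    by linarith
qed

lemma sum_abs_mult_sqrt_diff_square_approx:
  fixes b :: real
  assumes "0 \<le> b"
  shows "\<bar>(\<Sum>k=-\<lfloor>b\<rfloor>..\<lfloor>b\<rfloor>. \<bar>real_of_int k\<bar> * sqrt (b\<^sup>2 - (real_of_int k)\<^sup>2)) - 2 / 3 * b ^ 3\<bar>
    \<le> 4 * b\<^sup>2"
proof -
  define N where "N = nat \<lfloor>b\<rfloor>"
  have floor_b: "\<lfloor>b\<rfloor> = int N"
    using assms by (simp add: N_def)
  have "(\<Sum>k=-\<lfloor>b\<rfloor>..\<lfloor>b\<rfloor>. \<bar>real_of_int k\<bar> * sqrt (b\<^sup>2 - (real_of_int k)\<^sup>2))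
      = 2 * (\<Sum>k\<le>N. real k * sqrt (b\<^sup>2 - (real k)\<^sup>2))"
    unfolding floor_b by (subst sum_symmetric_int_interval) simp_all
  then show ?thesis
    using sum_mult_sqrt_diff_square_approx[OF assms] unfolding N_def by (simp add: abs_le_iff)
qed

section \<open>Lattice points of a disc on the level lines of a linear form\<close>

lemma brahmagupta_fibonacci_identity:
  fixes p q a b :: "'a :: comm_ring_1"
  shows "(p\<^sup>2 + q\<^sup>2) * (a\<^sup>2 + b\<^sup>2) = (p * a + q * b)\<^sup>2 + (p * b - q * a)\<^sup>2"
  by (simp add: power2_eq_square algebra_simps)

lemma mem_disc_points_iff:
  "x \<in> disc_points (real R) \<longleftrightarrow> (fst x)\<^sup>2 + (snd x)\<^sup>2 \<le> (int R)\<^sup>2"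
proof -
  have "x \<in> disc_points (real R) \<longleftrightarrow> (real_of_int (fst x))\<^sup>2 + (real_of_int (snd x))\<^sup>2 \<le> (real R)\<^sup>2"
    by (cases x) (auto simp: disc_points_def enorm_def intro: real_le_lsqrt dest: sqrt_le_D)
  also have "\<dots> \<longleftrightarrow> real_of_int ((fst x)\<^sup>2 + (snd x)\<^sup>2) \<le> real_of_int ((int R)\<^sup>2)"
    by simp
  also have "\<dots> \<longleftrightarrow> (fst x)\<^sup>2 + (snd x)\<^sup>2 \<le> (int R)\<^sup>2"
    by (rule of_int_le_iff)
  finally show ?thesis .
qed

lemma finite_disc_points: "finite (disc_points (real R))"
proof (rule finite_subset)
  show "disc_points (real R) \<subseteq> {-int R..int R} \<times> {-int R..int R}"
  proof
    fix x assume "x \<in> disc_points (real R)"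
    then have "(fst x)\<^sup>2 \<le> (int R)\<^sup>2" "(snd x)\<^sup>2 \<le> (int R)\<^sup>2"
      by (auto simp: mem_disc_points_iff intro: order_trans[rotated])
    then have "\<bar>fst x\<bar> \<le> int R" "\<bar>snd x\<bar> \<le> int R"
      using abs_le_square_iff[of _ "int R"] by auto
    then show "x \<in> {-int R..int R} \<times> {-int R..int R}"
      by (cases x) auto
  qed
qed simp

lemma card_disc_points_ge: "(real R)\<^sup>2 \<le> real (card (disc_points (real R)))"
proof -
  define h where "h = int (R div 2)"
  have square: "{-h..h} \<times> {-h..h} \<subseteq> disc_points (real R)"
  proof
    fix x assume "x \<in> {-h..h} \<times> {-h..h}"
    then have "(fst x)\<^sup>2 \<le> h\<^sup>2" "(snd x)\<^sup>2 \<le> h\<^sup>2"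
      by (auto simp: abs_le_square_iff[symmetric] abs_le_iff h_def)
    moreover have "(2 * h)\<^sup>2 \<le> (int R)\<^sup>2"
      by (intro power_mono) (auto simp: h_def)
    moreover have "(2 * h)\<^sup>2 = 4 * h\<^sup>2"
      by (simp add: power2_eq_square)
    ultimately have "(fst x)\<^sup>2 + (snd x)\<^sup>2 \<le> (int R)\<^sup>2"
      using zero_le_power2[of h] by linarith
    then show "x \<in> disc_points (real R)"
      by (simp add: mem_disc_points_iff)
  qed
  have "int R \<le> 2 * h + 1"
    by (simp add: h_def)
  then have "(real R)\<^sup>2 \<le> (real_of_int (2 * h + 1))\<^sup>2"
    by (intro power_mono) simp_all
  also have "\<dots> = real (card ({-h..h} \<times> {-h..h}))"
    by (simp add: card_cartesian_product h_def power2_eq_square)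
  also have "\<dots> \<le> real (card (disc_points (real R)))"
    using card_mono[OF finite_disc_points square] by (simp only: of_nat_le_iff)
  finally show ?thesis .
qed

lemma abs_le_floor_sqrt_iff:
  fixes k :: int and y :: real
  assumes "0 \<le> y"
  shows "\<bar>k\<bar> \<le> \<lfloor>sqrt y\<rfloor> \<longleftrightarrow> real_of_int (k\<^sup>2) \<le> y"
proof -
  have "\<bar>k\<bar> \<le> \<lfloor>sqrt y\<rfloor> \<longleftrightarrow> sqrt ((real_of_int k)\<^sup>2) \<le> sqrt y"
    by (simp add: le_floor_iff)
  also have "\<dots> \<longleftrightarrow> real_of_int (k\<^sup>2) \<le> y"
    by (simp only: real_sqrt_le_iff of_int_power)
  finally show ?thesis .
qed

lemma card_int_solutions_square_le:
  fixes m e s :: int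
  assumes "0 < m" "0 \<le> s"
  shows "\<bar>real (card {j. (m * j - e)\<^sup>2 \<le> s}) - 2 * sqrt s / m\<bar> \<le> 1"
proof -
  define \<alpha> where "\<alpha> = (e - sqrt s) / m"
  define \<beta> where "\<beta> = (e + sqrt s) / m"
  have iff: "(m * j - e)\<^sup>2 \<le> s \<longleftrightarrow> \<alpha> \<le> j \<and> j \<le> \<beta>" for j
  proof -
    have "(m * j - e)\<^sup>2 \<le> s \<longleftrightarrow> sqrt ((real_of_int (m * j - e))\<^sup>2) \<le> sqrt s"
      by (simp only: real_sqrt_le_iff flip: of_int_power of_int_le_iff)
    then have "(m * j - e)\<^sup>2 \<le> s \<longleftrightarrow> \<bar>real_of_int (m * j - e)\<bar> \<le> sqrt s"
      by simp
    then show ?thesis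
      using assms by (auto simp: \<alpha>_def \<beta>_def abs_le_iff field_simps)
  qed
  have "{j. (m * j - e)\<^sup>2 \<le> s} = {\<lceil>\<alpha>\<rceil>..\<lfloor>\<beta>\<rfloor>}"
    by (simp only: set_eq_iff mem_Collect_eq atLeastAtMost_iff iff ceiling_le_iff le_floor_iff simp_thms)
  then have card: "card {j. (m * j - e)\<^sup>2 \<le> s} = nat (\<lfloor>\<beta>\<rfloor> - \<lceil>\<alpha>\<rceil> + 1)"
    by simp
  have width: "\<beta> - \<alpha> = 2 * sqrt s / m" "0 \<le> 2 * sqrt s / m"
    using assms by (simp_all add: \<alpha>_def \<beta>_def field_simps)
  have "\<beta> - 1 < \<lfloor>\<beta>\<rfloor>" "\<lfloor>\<beta>\<rfloor> \<le> \<beta>" "\<alpha> \<le> \<lceil>\<alpha>\<rceil>" "\<lceil>\<alpha>\<rceil> < \<alpha> + 1"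
    by linarith+
  moreover from this width have "0 \<le> \<lfloor>\<beta>\<rfloor> - \<lceil>\<alpha>\<rceil> + 1"
    by linarith
  ultimately show ?thesis
    unfolding card using width by simp linarith
qed

lemma linear_form_eq_iff:
  fixes p q u v k :: int
  assumes "p * u + q * v = 1"
  shows "p * fst x + q * snd x = k \<longleftrightarrow> (\<exists>j. x = (k * u - j * q, k * v + j * p))"
proof
  assume k: "p * fst x + q * snd x = k"
  have "fst x = k * u - (u * snd x - v * fst x) * q" "snd x = k * v + (u * snd x - v * fst x) * p"
    using assms unfolding k[symmetric] by algebra+
  then show "\<exists>j. x = (k * u - j * q, k * v + j * p)"
    by (metis prod.collapse)
next
  assume "\<exists>j. x = (k * u - j * q, k * v + j * p)"
  then obtain j where x: "x = (k * u - j * q, k * v + j * p)" ..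
  have "p * (k * u - j * q) + q * (k * v + j * p) = k"
    using assms by algebra
  then show "p * fst x + q * snd x = k"
    by (simp add: x)
qed

lemma linear_form_square_le:
  fixes p q :: int
  assumes "x \<in> disc_points (real R)"
  shows "(p * fst x + q * snd x)\<^sup>2 \<le> (p\<^sup>2 + q\<^sup>2) * (int R)\<^sup>2"
proof -
  have "(p * fst x + q * snd x)\<^sup>2 \<le> (p\<^sup>2 + q\<^sup>2) * ((fst x)\<^sup>2 + (snd x)\<^sup>2)"
    unfolding brahmagupta_fibonacci_identity by simp
  also have "\<dots> \<le> (p\<^sup>2 + q\<^sup>2) * (int R)\<^sup>2"
    using assms by (intro mult_left_mono) (simp_all add: mem_disc_points_iff)
  finally show ?thesis .
qed

lemma level_line_param_inj:
  fixes p q u v k :: int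
  assumes "p * u + q * v = 1"
  shows "inj (\<lambda>j. (k * u - j * q, k * v + j * p))"
proof (rule injI)
  fix i j :: int
  assume "(k * u - i * q, k * v + i * p) = (k * u - j * q, k * v + j * p)"
  then have ij: "i * q = j * q" "i * p = j * p"
    by simp_all
  have "i = i * (p * u + q * v)"
    using assms by simp
  also have "\<dots> = (i * p) * u + (i * q) * v"
    by (simp add: algebra_simps)
  also have "\<dots> = j * (p * u + q * v)"
    unfolding ij by (simp add: algebra_simps)
  finally show "i = j"
    using assms by simp
qed

lemma level_line_param_norm:
  fixes p q u v k j :: int
  assumes "p * u + q * v = 1"
  shows "(p\<^sup>2 + q\<^sup>2) * ((k * u - j * q)\<^sup>2 + (k * v + j * p)\<^sup>2)
    = ((p\<^sup>2 + q\<^sup>2) * j - (q * u - p * v) * k)\<^sup>2 + k\<^sup>2"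
proof -
  have "p * (k * u - j * q) + q * (k * v + j * p) = k"
    using assms by algebra
  moreover have "p * (k * v + j * p) - q * (k * u - j * q) = (p\<^sup>2 + q\<^sup>2) * j - (q * u - p * v) * k"
    by (simp add: power2_eq_square algebra_simps)
  ultimately show ?thesis
    by (simp add: brahmagupta_fibonacci_identity add.commute)
qed

lemma card_disc_points_level_set:
  fixes p q u v k :: int and R :: nat
  assumes bezout: "p * u + q * v = 1" and k: "k\<^sup>2 \<le> (p\<^sup>2 + q\<^sup>2) * (int R)\<^sup>2"
  shows "\<bar>real (card {x \<in> disc_points (real R). p * fst x + q * snd x = k})
      - 2 * sqrt (real_of_int ((p\<^sup>2 + q\<^sup>2) * (int R)\<^sup>2 - k\<^sup>2)) / real_of_int (p\<^sup>2 + q\<^sup>2)\<bar> \<le> 1"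
proof -
  define m where "m = p\<^sup>2 + q\<^sup>2"
  define d where "d = q * u - p * v"
  define g where "g j = (k * u - j * q, k * v + j * p)" for j
  have "0 < m"
    using bezout by (auto simp: m_def sum_power2_gt_zero_iff)
  have norm: "m * ((fst (g j))\<^sup>2 + (snd (g j))\<^sup>2) = (m * j - d * k)\<^sup>2 + k\<^sup>2" for j
    unfolding m_def d_def g_def fst_conv snd_conv by (rule level_line_param_norm[OF bezout])
  have "inj g"
    unfolding g_def[abs_def] by (rule level_line_param_inj[OF bezout])
  have mem_g: "g j \<in> disc_points (real R) \<longleftrightarrow> (m * j - d * k)\<^sup>2 \<le> m * (int R)\<^sup>2 - k\<^sup>2" for j
  proof -
    have "g j \<in> disc_points (real R) \<longleftrightarrow> m * ((fst (g j))\<^sup>2 + (snd (g j))\<^sup>2) \<le> m * (int R)\<^sup>2"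
      using \<open>0 < m\<close> by (simp add: mem_disc_points_iff)
    then show ?thesis
      unfolding norm by linarith
  qed
  have "{x \<in> disc_points (real R). p * fst x + q * snd x = k}
      = g ` {j. (m * j - d * k)\<^sup>2 \<le> m * (int R)\<^sup>2 - k\<^sup>2}"
  proof (rule set_eqI)
    fix x
    have "p * fst x + q * snd x = k \<longleftrightarrow> (\<exists>j. x = g j)"
      unfolding g_def by (rule linear_form_eq_iff[OF bezout])
    then show "x \<in> {x \<in> disc_points (real R). p * fst x + q * snd x = k}
        \<longleftrightarrow> x \<in> g ` {j. (m * j - d * k)\<^sup>2 \<le> m * (int R)\<^sup>2 - k\<^sup>2}"
      unfolding mem_Collect_eq image_iff Bex_def mem_g[symmetric] by blast
  qed
  then have "card {x \<in> disc_points (real R). p * fst x + q * snd x = k}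
      = card {j. (m * j - d * k)\<^sup>2 \<le> m * (int R)\<^sup>2 - k\<^sup>2}"
    using \<open>inj g\<close> by (simp add: card_image inj_on_subset)
  with card_int_solutions_square_le[OF \<open>0 < m\<close>, of "m * (int R)\<^sup>2 - k\<^sup>2" "d * k"] k
  show ?thesis
    by (simp add: m_def)
qed

lemma sum_disc_points_linear_form:
  fixes p q u v :: int and R :: nat and w :: "int \<Rightarrow> real"
  assumes bezout: "p * u + q * v = 1"
  defines "m \<equiv> p\<^sup>2 + q\<^sup>2"
  defines "n \<equiv> \<lfloor>sqrt (real_of_int (m * (int R)\<^sup>2))\<rfloor>"
  shows "\<bar>(\<Sum>x\<in>disc_points (real R). w (p * fst x + q * snd x))
      - (\<Sum>k=-n..n. w k * (2 * sqrt (real_of_int (m * (int R)\<^sup>2 - k\<^sup>2)) / m))\<bar>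
    \<le> (\<Sum>k=-n..n. \<bar>w k\<bar>)"
proof -
  let ?P = "disc_points (real R)"
  let ?L = "\<lambda>x. p * fst x + q * snd x"
  let ?c = "\<lambda>k. real (card {x \<in> ?P. ?L x = k})"
  let ?e = "\<lambda>k. 2 * sqrt (real_of_int (m * (int R)\<^sup>2 - k\<^sup>2)) / m"
  have "0 \<le> real_of_int (m * (int R)\<^sup>2)"
    by (simp add: m_def)
  then have "\<bar>k\<bar> \<le> n \<longleftrightarrow> k\<^sup>2 \<le> m * (int R)\<^sup>2" for k
    unfolding n_def by (simp only: abs_le_floor_sqrt_iff of_int_le_iff)
  moreover have "k \<in> {-n..n} \<longleftrightarrow> \<bar>k\<bar> \<le> n" for k
    by auto
  ultimately have in_range: "k \<in> {-n..n} \<longleftrightarrow> k\<^sup>2 \<le> m * (int R)\<^sup>2" for k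
    by blast
  have "?L x \<in> {-n..n}" if "x \<in> ?P" for x
    using linear_form_square_le[OF that, of p q] in_range[of "?L x"] by (simp add: m_def)
  then have "?L ` ?P \<subseteq> {-n..n}"
    by (rule image_subsetI)
  then have "(\<Sum>x\<in>?P. w (?L x)) = (\<Sum>k=-n..n. \<Sum>x\<in>{x \<in> ?P. ?L x = k}. w (?L x))"
    by (rule sum.group[OF finite_disc_points finite_atLeastAtMost_int, symmetric])
  also have "\<dots> = (\<Sum>k=-n..n. w k * ?c k)"
    by (intro sum.cong) auto
  finally have "\<bar>(\<Sum>x\<in>?P. w (?L x)) - (\<Sum>k=-n..n. w k * ?e k)\<bar> = \<bar>\<Sum>k=-n..n. w k * (?c k - ?e k)\<bar>"
    by (simp add: sum_subtractf right_diff_distrib)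
  also have "\<dots> \<le> (\<Sum>k=-n..n. \<bar>w k\<bar> * \<bar>?c k - ?e k\<bar>)"
    by (rule order_trans[OF sum_abs]) (simp add: abs_mult)
  also have "\<dots> \<le> (\<Sum>k=-n..n. \<bar>w k\<bar>)"
  proof (rule sum_mono)
    fix k assume "k \<in> {-n..n}"
    then have "k\<^sup>2 \<le> (p\<^sup>2 + q\<^sup>2) * (int R)\<^sup>2"
      using in_range[of k] by (simp add: m_def)
    from card_disc_points_level_set[OF bezout this]
    have "\<bar>?c k - ?e k\<bar> \<le> 1"
      unfolding m_def .
    then show "\<bar>w k\<bar> * \<bar>?c k - ?e k\<bar> \<le> \<bar>w k\<bar>"
      by (simp add: mult_left_le)
  qed
  finally show ?thesis .
qed

lemma sum_abs_int_floor_interval_le: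
  fixes b :: real
  assumes "0 \<le> b"
  shows "(\<Sum>k=-\<lfloor>b\<rfloor>..\<lfloor>b\<rfloor>. \<bar>real_of_int k\<bar>) \<le> 3 * b\<^sup>2"
proof -
  define N where "N = nat \<lfloor>b\<rfloor>"
  have floor_b: "\<lfloor>b\<rfloor> = int N"
    using assms by (simp add: N_def)
  then have "real N \<le> b"
    by linarith
  have "(\<Sum>k=- int N..int N. \<bar>real_of_int k\<bar>) \<le> (\<Sum>k=- int N..int N. real N)"
    by (intro sum_mono) auto
  also have "\<dots> = (2 * real N + 1) * real N"
    by simp
  also have "\<dots> \<le> 3 * (real N)\<^sup>2"
    using mult_left_mono[of 1 "real N" "real N"] by (cases "N = 0") (auto simp: power2_eq_square)
  also have "\<dots> \<le> 3 * b\<^sup>2"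
    using power_mono[OF \<open>real N \<le> b\<close>, of 2] by simp
  finally show ?thesis
    unfolding floor_b .
qed

lemma sum_abs_linear_form_disc_points:
  fixes p q u v :: int and R :: nat
  assumes bezout: "p * u + q * v = 1"
  shows "\<bar>(\<Sum>x\<in>disc_points (real R). \<bar>real_of_int (p * fst x + q * snd x)\<bar>)
      - 4 / 3 * sqrt (real_of_int (p\<^sup>2 + q\<^sup>2)) * real R ^ 3\<bar>
    \<le> (3 * real_of_int (p\<^sup>2 + q\<^sup>2) + 8) * (real R)\<^sup>2"
proof -
  define m where "m = p\<^sup>2 + q\<^sup>2"
  have "0 < m"
    using bezout by (auto simp: m_def sum_power2_gt_zero_iff)
  define b where "b = sqrt (real_of_int (m * (int R)\<^sup>2))"
  have "0 \<le> b"
    using \<open>0 < m\<close> by (simp add: b_def)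
  have b2: "b\<^sup>2 = m * (real R)\<^sup>2"
    using \<open>0 < m\<close> by (simp add: b_def)
  define S where "S = (\<Sum>k=-\<lfloor>b\<rfloor>..\<lfloor>b\<rfloor>. \<bar>real_of_int k\<bar> * sqrt (b\<^sup>2 - (real_of_int k)\<^sup>2))"
  have "\<bar>real_of_int k\<bar> * (2 * sqrt (real_of_int (m * (int R)\<^sup>2 - k\<^sup>2)) / m)
      = 2 / m * (\<bar>real_of_int k\<bar> * sqrt (b\<^sup>2 - (real_of_int k)\<^sup>2))" for k
  proof -
    have "real_of_int (m * (int R)\<^sup>2 - k\<^sup>2) = b\<^sup>2 - (real_of_int k)\<^sup>2"
      by (simp add: b2)
    then show ?thesis
      by (simp add: ac_simps)
  qed
  then have "(\<Sum>k=-\<lfloor>b\<rfloor>..\<lfloor>b\<rfloor>. \<bar>real_of_int k\<bar> * (2 * sqrt (real_of_int (m * (int R)\<^sup>2 - k\<^sup>2)) / m))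
      = 2 / m * S"
    by (simp only: S_def sum_distrib_left)
  then have line: "\<bar>(\<Sum>x\<in>disc_points (real R). \<bar>real_of_int (p * fst x + q * snd x)\<bar>) - 2 / m * S\<bar>
      \<le> (\<Sum>k=-\<lfloor>b\<rfloor>..\<lfloor>b\<rfloor>. \<bar>real_of_int k\<bar>)"
    using sum_disc_points_linear_form[OF bezout, where R = R and w = "\<lambda>k. \<bar>real_of_int k\<bar>"]
    unfolding m_def[symmetric] b_def[symmetric] by simp
  have line_error: "(\<Sum>k=-\<lfloor>b\<rfloor>..\<lfloor>b\<rfloor>. \<bar>real_of_int k\<bar>) \<le> 3 * m * (real R)\<^sup>2"
    using sum_abs_int_floor_interval_le[OF \<open>0 \<le> b\<close>] by (simp add: b2)
  have "\<bar>2 / m * S - 2 / m * (2 / 3 * b ^ 3)\<bar> = \<bar>2 / m * (S - 2 / 3 * b ^ 3)\<bar>"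
    by (simp only: right_diff_distrib)
  also have "\<dots> = 2 / m * \<bar>S - 2 / 3 * b ^ 3\<bar>"
    using \<open>0 < m\<close> by (simp only: abs_mult) simp
  also have "\<dots> \<le> 2 / m * (4 * b\<^sup>2)"
    using sum_abs_mult_sqrt_diff_square_approx[OF \<open>0 \<le> b\<close>] \<open>0 < m\<close>
    by (intro mult_left_mono) (simp_all add: S_def)
  also have "\<dots> = 8 * (real R)\<^sup>2"
    using \<open>0 < m\<close> by (simp add: b2)
  finally have moment_error: "\<bar>2 / m * S - 2 / m * (2 / 3 * b ^ 3)\<bar> \<le> 8 * (real R)\<^sup>2" .
  have "2 / m * (2 / 3 * b ^ 3) = 4 / 3 * sqrt (real_of_int m) * real R ^ 3"
    using \<open>0 < m\<close> by (simp add: b_def real_sqrt_mult power3_eq_cube)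
  with line line_error moment_error show ?thesis
    unfolding m_def[symmetric] by (simp add: abs_le_iff algebra_simps)
qed

lemma card_disc_points_approx:
  "\<bar>real (card (disc_points (real R))) - pi * (real R)\<^sup>2\<bar> \<le> 8 * real R + 1"
proof -
  have "\<bar>real (card (disc_points (real R)))
      - 2 * (\<Sum>k=- int R..int R. sqrt ((real R)\<^sup>2 - (real_of_int k)\<^sup>2))\<bar> \<le> 2 * real R + 1"
    using sum_disc_points_linear_form[where p = 1 and q = 0 and u = 1 and v = 0 and R = R and w = "\<lambda>_. 1"]
    by (simp add: sum_distrib_left)
  then show ?thesis
    using sum_sqrt_diff_square_symmetric_approx[of R] by (simp add: abs_le_iff)
qed

section \<open>Orbit lengths\<close>

lemma orbit_length_eq:
  "orbit_length (a, b) = 2 * (\<bar>real_of_int (2 * a - b)\<bar> + \<bar>real_of_int (a + b)\<bar> + \<bar>real_of_int (a - 2 * b)\<bar>)"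
proof -
  have "orbit_path (a, b) = [(a, b), (- a + b, b), (- a + b, - a), (- b, - a), (- b, a - b), (a, a - b)]"
    by (simp add: orbit_path_def K1_def K2_def)
  moreover have "{..<6::nat} = {0, 1, 2, 3, 4, 5}"
    by auto
  ultimately show ?thesis
    by (simp add: orbit_length_def edist_def enorm_def algebra_simps abs_minus_commute)
qed

lemma sum_orbit_length_approx:
  "\<bar>(\<Sum>x\<in>disc_points (real R). orbit_length x) - 8 / 3 * (sqrt 2 + 2 * sqrt 5) * real R ^ 3\<bar>
    \<le> 120 * (real R)\<^sup>2"
proof -
  let ?P = "disc_points (real R)"
  have "\<bar>(\<Sum>x\<in>?P. \<bar>real_of_int (2 * fst x - snd x)\<bar>) - 4 / 3 * sqrt 5 * real R ^ 3\<bar> \<le> 23 * (real R)\<^sup>2"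
    using sum_abs_linear_form_disc_points[where p = 2 and q = "-1" and u = 0 and v = "-1" and R = R]
    by simp
  moreover have "\<bar>(\<Sum>x\<in>?P. \<bar>real_of_int (fst x + snd x)\<bar>) - 4 / 3 * sqrt 2 * real R ^ 3\<bar> \<le> 14 * (real R)\<^sup>2"
    using sum_abs_linear_form_disc_points[where p = 1 and q = 1 and u = 1 and v = 0 and R = R]
    by simp
  moreover have "\<bar>(\<Sum>x\<in>?P. \<bar>real_of_int (fst x - 2 * snd x)\<bar>) - 4 / 3 * sqrt 5 * real R ^ 3\<bar> \<le> 23 * (real R)\<^sup>2"
    using sum_abs_linear_form_disc_points[where p = 1 and q = "-2" and u = 1 and v = 0 and R = R]
    by simp
  moreover have "(\<Sum>x\<in>?P. orbit_length x) = 2 * ((\<Sum>x\<in>?P. \<bar>real_of_int (2 * fst x - snd x)\<bar>)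
      + (\<Sum>x\<in>?P. \<bar>real_of_int (fst x + snd x)\<bar>) + (\<Sum>x\<in>?P. \<bar>real_of_int (fst x - 2 * snd x)\<bar>))"
    unfolding sum.distrib[symmetric] sum_distrib_left
    by (intro sum.cong) (auto simp: orbit_length_eq)
  ultimately show ?thesis
    unfolding abs_le_iff by (simp add: algebra_simps)
qed

lemma ratio_approx:
  fixes S N K c A B r :: real
  assumes "\<bar>S - K * r ^ 3\<bar> \<le> A * r\<^sup>2" and "\<bar>N - c * r\<^sup>2\<bar> \<le> B * r"
    and "r\<^sup>2 \<le> N" "0 < r" "0 < c" "0 \<le> K"
  shows "\<bar>S / N - K / c * r\<bar> \<le> A + K * B / c"
proof -
  have "0 < r\<^sup>2"
    using \<open>0 < r\<close> by simp
  then have "0 < N"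
    using \<open>r\<^sup>2 \<le> N\<close> by linarith
  have "\<bar>c * (S - K * r ^ 3) - K * r * (N - c * r\<^sup>2)\<bar>
      \<le> \<bar>c * (S - K * r ^ 3)\<bar> + \<bar>K * r * (N - c * r\<^sup>2)\<bar>"
    by (rule abs_triangle_ineq4)
  also have "\<dots> = c * \<bar>S - K * r ^ 3\<bar> + K * r * \<bar>N - c * r\<^sup>2\<bar>"
    using assms by (simp add: abs_mult)
  also have "\<dots> \<le> c * (A * r\<^sup>2) + K * r * (B * r)"
    using assms by (intro add_mono mult_left_mono) simp_all
  finally have numerator:
    "\<bar>c * (S - K * r ^ 3) - K * r * (N - c * r\<^sup>2)\<bar> \<le> c * (A * r\<^sup>2) + K * r * (B * r)" .
  have "S / N - K / c * r = (c * (S - K * r ^ 3) - K * r * (N - c * r\<^sup>2)) / (c * N)"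
    using \<open>0 < N\<close> \<open>0 < c\<close> by (simp add: field_simps power2_eq_square power3_eq_cube)
  then have "\<bar>S / N - K / c * r\<bar> = \<bar>c * (S - K * r ^ 3) - K * r * (N - c * r\<^sup>2)\<bar> / (c * N)"
    using \<open>0 < N\<close> \<open>0 < c\<close> by (simp add: abs_divide)
  also have "\<dots> \<le> (c * (A * r\<^sup>2) + K * r * (B * r)) / (c * r\<^sup>2)"
    using numerator \<open>0 < r\<^sup>2\<close> \<open>r\<^sup>2 \<le> N\<close> \<open>0 < c\<close>
    by (intro frac_le order_trans[OF abs_ge_zero numerator]) simp_all
  also have "\<dots> = A + K * B / c"
    using \<open>0 < r\<close> \<open>0 < c\<close> by (simp add: field_simps power2_eq_square)
  finally show ?thesis .
qed

theorem theorem1p2: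
  shows "\<exists>C. \<forall>R::nat. R \<ge> 1 \<longrightarrow>
     \<bar>(\<Sum>x\<in>disc_points (real R). orbit_length x) / real (card (disc_points (real R)))
       - 8 / (3 * pi) * (sqrt 2 + 2 * sqrt 5) * real R\<bar> \<le> C"
proof (intro exI allI impI)
  define K where "K = 8 / 3 * (sqrt 2 + 2 * sqrt 5)"
  fix R :: nat
  assume "R \<ge> 1"
  then have "\<bar>real (card (disc_points (real R))) - pi * (real R)\<^sup>2\<bar> \<le> 9 * real R"
    using card_disc_points_approx[of R] by simp
  from ratio_approx[OF sum_orbit_length_approx this card_disc_points_ge]
  have "\<bar>(\<Sum>x\<in>disc_points (real R). orbit_length x) / real (card (disc_points (real R)))
      - K / pi * real R\<bar> \<le> 120 + K * 9 / pi"
    using \<open>R \<ge> 1\<close> by (simp add: K_def)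
  moreover have "K / pi * real R = 8 / (3 * pi) * (sqrt 2 + 2 * sqrt 5) * real R"
    by (simp add: K_def)
  ultimately show "\<bar>(\<Sum>x\<in>disc_points (real R). orbit_length x) / real (card (disc_points (real R)))
      - 8 / (3 * pi) * (sqrt 2 + 2 * sqrt 5) * real R\<bar> \<le> 120 + K * 9 / pi"
    by simp
qed

end
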